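(* Let $(V_o,w_o,\mu_o)$ be a simple weighted graph with adapted weight $\sigma_o$ and adapted path metric $d_{\sigma_o}$. Let $(V,w,\mu)$ be its modified graph with weight $\mathfrak n$, with adapted weight $\sigma$ and adapted path metric $d_\sigma$. Then: (1) $d_\sigma|_{V_o\times V_o}=d_{\sigma_o}$; (2) for every $x_0\in V_o$ and $r>0$, \[\mu_o\big(B_{d_{\sigma_o}}(x_0,r)\big)\le\mu\big(B_{d_\sigma}(x_0,r)\big)\le3\,\mu_o\big(B_{d_{\sigma_o}}(x_0,r)\big),\] where $B_{d_{\sigma_o}}(x_0,r)$ is a ball in $V_o$ and $B_{d_\sigma}(x_0,r)$ is a ball in $V$.
   Context: **Weighted graphs.** A simple weighted graph $(V,w,\mu)$ consists of a countably infinite set $V$, a symmetric function $w:V\times V\to[0,\infty)$ and a function $\mu:V\to(0,\infty)$. The graph with edges $\{x\sim y:w(x,y)>0\}$ is assumed to be locally finite, connected, and without loops or multiple edges. **Adapted weights and metrics.** An adapted weight is a symmetric $\sigma:E\to(0,1]$ with $\frac1{\mu(x)}\sum_y w(x,y)\sigma(x,y)^2\le1$ for all $x$. The adapted path metric $d_\sigma(x,y)$ is the infimum of $\sum_i\sigma(x_i,x_{i+1})$ over paths $x=x_0\sim\cdots\sim x_n=y$. Closed balls are $B_d(x,r)=\{y:d(x,y)\le r\}$. **Modified graph.** Fix an orientation $E_o^+$ of $E_o$, and let $\mathfrak n:E_o\to\mathbb N_+$ be symmetric with $\mathfrak n\ge2$. For $e=(x,y)\in E_o^+$, add distinct new vertices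 $x^e_1,\dots,x^e_{\mathfrak n(e)-1}$, set $x_0^e=x$, $x^e_{\mathfrak n(e)}=y$, and replace the edge $x\sim y$ by the path $x^e_0\sim\cdots\sim x^e_{\mathfrak n(e)}$. Weights and measure: - $w(x^e_i,x^e_{i+1})=\mathfrak n(e)w_o(e)$, symmetric, and $w=0$ otherwise; - $\mu=\mu_o$ on $V_o$, and $\mu(x^e_i)=2w_o(e)\sigma_o(e)^2/\mathfrak n(e)$ for $1\le i\le\mathfrak n(e)-1$; - $\sigma(x^e_i,x^e_{i+1})=\sigma_o(e)/\mathfrak n(e)$. *)

theory Defs
  imports "HOL-Analysis.Analysis"
begin

definition is_path :: "('v \<Rightarrow> 'v \<Rightarrow> real) \<Rightarrow> 'v list \<Rightarrow> bool" where
  "is_path w xs \<longleftrightarrow> xs \<noteq> [] \<and> (\<forall>i < length xs - 1. w (xs ! i) (xs ! Suc i) > 0)"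

definition weighted_graph :: "'v set \<Rightarrow> ('v \<Rightarrow> 'v \<Rightarrow> real) \<Rightarrow> ('v \<Rightarrow> real) \<Rightarrow> bool" where
  "weighted_graph V w \<mu> \<longleftrightarrow>
     countable V \<and> infinite V \<and>
     (\<forall>x y. w x y = w y x) \<and> (\<forall>x y. 0 \<le> w x y) \<and>
     (\<forall>x y. w x y > 0 \<longrightarrow> x \<in> V \<and> y \<in> V) \<and>
     (\<forall>x. w x x = 0) \<and>
     (\<forall>x\<in>V. 0 < \<mu> x) \<and>
     (\<forall>x\<in>V. finite {y. w x y > 0}) \<and>
     (\<forall>x\<in>V. \<forall>y\<in>V. \<exists>xs. is_path w xs \<and> hd xs = x \<and> last xs = y)"

definition adapted_weight :: "'v set \<Rightarrow> ('v \<Rightarrow> 'v \<Rightarrow> real) \<Rightarrow> ('v \<Rightarrow> real) \<Rightarrow> ('v \<Rightarrow> 'v \<Rightarrow> real) \<Rightarrow> bool" where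
  "adapted_weight V w \<mu> \<sigma> \<longleftrightarrow>
     (\<forall>x y. w x y > 0 \<longrightarrow> \<sigma> x y = \<sigma> y x \<and> 0 < \<sigma> x y \<and> \<sigma> x y \<le> 1) \<and>
     (\<forall>x\<in>V. (1 / \<mu> x) * (\<Sum>y\<in>{y. w x y > 0}. w x y * (\<sigma> x y)\<^sup>2) \<le> 1)"

definition path_len :: "('v \<Rightarrow> 'v \<Rightarrow> real) \<Rightarrow> 'v list \<Rightarrow> real" where
  "path_len \<sigma> xs = (\<Sum>i < length xs - 1. \<sigma> (xs ! i) (xs ! Suc i))"

definition path_dist :: "('v \<Rightarrow> 'v \<Rightarrow> real) \<Rightarrow> ('v \<Rightarrow> 'v \<Rightarrow> real) \<Rightarrow> 'v \<Rightarrow> 'v \<Rightarrow> real" where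
  "path_dist w \<sigma> x y = Inf {path_len \<sigma> xs | xs. is_path w xs \<and> hd xs = x \<and> last xs = y}"

definition cball_in :: "'v set \<Rightarrow> ('v \<Rightarrow> 'v \<Rightarrow> real) \<Rightarrow> 'v \<Rightarrow> real \<Rightarrow> 'v set" where
  "cball_in V d x r = {y \<in> V. d x y \<le> r}"

definition vmeasure :: "('v \<Rightarrow> real) \<Rightarrow> 'v set \<Rightarrow> ennreal" where
  "vmeasure \<mu> A = (\<Sum>\<^sub>\<infinity>x\<in>A. ennreal (\<mu> x))"

text \<open>Vertices of the modified graph: original vertices, and new vertices
  Sub x y i standing for x^e_i, e = (x,y) in the orientation E_o^+, 1 \<le> i \<le> n(e)-1.\<close>

datatype 'a mvert = Orig 'a | Sub 'a 'a nat

definition orientation :: "('a \<Rightarrow> 'a \<Rightarrow> real) \<Rightarrow> ('a \<Rightarrow> 'a \<Rightarrow> bool) \<Rightarrow> bool" where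
  "orientation w ori \<longleftrightarrow> (\<forall>x y. ori x y \<longrightarrow> w x y > 0) \<and>
     (\<forall>x y. w x y > 0 \<longrightarrow> (ori x y \<longleftrightarrow> \<not> ori y x))"

definition mpt :: "('a \<Rightarrow> 'a \<Rightarrow> nat) \<Rightarrow> 'a \<Rightarrow> 'a \<Rightarrow> nat \<Rightarrow> 'a mvert" where
  "mpt n x y i = (if i = 0 then Orig x else if i = n x y then Orig y else Sub x y i)"

definition mod_V :: "'a set \<Rightarrow> ('a \<Rightarrow> 'a \<Rightarrow> bool) \<Rightarrow> ('a \<Rightarrow> 'a \<Rightarrow> nat) \<Rightarrow> 'a mvert set" where
  "mod_V Vo ori n = Orig ` Vo \<union> {Sub x y i | x y i. ori x y \<and> 1 \<le> i \<and> i \<le> n x y - 1}"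

definition sub_edge :: "('a \<Rightarrow> 'a \<Rightarrow> bool) \<Rightarrow> ('a \<Rightarrow> 'a \<Rightarrow> nat) \<Rightarrow> 'a mvert \<Rightarrow> 'a mvert \<Rightarrow> 'a \<Rightarrow> 'a \<Rightarrow> nat \<Rightarrow> bool" where
  "sub_edge ori n u v x y i \<longleftrightarrow> ori x y \<and> i < n x y \<and>
     ((u = mpt n x y i \<and> v = mpt n x y (Suc i)) \<or> (v = mpt n x y i \<and> u = mpt n x y (Suc i)))"

definition mod_w :: "('a \<Rightarrow> 'a \<Rightarrow> real) \<Rightarrow> ('a \<Rightarrow> 'a \<Rightarrow> bool) \<Rightarrow> ('a \<Rightarrow> 'a \<Rightarrow> nat) \<Rightarrow> 'a mvert \<Rightarrow> 'a mvert \<Rightarrow> real" where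
  "mod_w wo ori n u v =
     (if \<exists>x y i. sub_edge ori n u v x y i
      then (SOME c. \<exists>x y i. sub_edge ori n u v x y i \<and> c = real (n x y) * wo x y)
      else 0)"

definition mod_sigma :: "('a \<Rightarrow> 'a \<Rightarrow> real) \<Rightarrow> ('a \<Rightarrow> 'a \<Rightarrow> bool) \<Rightarrow> ('a \<Rightarrow> 'a \<Rightarrow> nat) \<Rightarrow> 'a mvert \<Rightarrow> 'a mvert \<Rightarrow> real" where
  "mod_sigma \<sigma>o ori n u v =
     (if \<exists>x y i. sub_edge ori n u v x y i
      then (SOME c. \<exists>x y i. sub_edge ori n u v x y i \<and> c = \<sigma>o x y / real (n x y))
      else 0)"

fun mod_mu :: "('a \<Rightarrow> 'a \<Rightarrow> real) \<Rightarrow> ('a \<Rightarrow> real) \<Rightarrow> ('a \<Rightarrow> 'a \<Rightarrow> real) \<Rightarrow> ('a \<Rightarrow> 'a \<Rightarrow> nat) \<Rightarrow> 'a mvert \<Rightarrow> real" where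
  "mod_mu wo \<mu>o \<sigma>o n (Orig x) = \<mu>o x"
| "mod_mu wo \<mu>o \<sigma>o n (Sub x y i) = 2 * wo x y * (\<sigma>o x y)\<^sup>2 / real (n x y)"

end

theory Submission
  imports Defs
begin

text \<open>Every edge \<open>e = x \<sim> y\<close> becomes a path of \<open>n(e)\<close> edges of \<open>\<sigma>\<close>-length \<open>\<sigma>\<^sub>o(e)/n(e)\<close>,
  so paths of the original graph lift to paths of the same length, and \<open>d\<^sub>\<sigma> \<le> d\<^sub>o\<close> on \<open>V\<^sub>o\<close>.
  Conversely, the potential that equals \<open>d\<^sub>o(x\<^sub>0, \<cdot>)\<close> on \<open>V\<^sub>o\<close> and grows linearly along each
  subdivided edge from its nearer endpoint is 1-Lipschitz for \<open>\<sigma>\<close>. This gives the reverse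
  inequality, and it shows that every new vertex in a ball of the modified graph lies on an edge
  with an endpoint \<open>a\<close> in the original ball. Charging the new vertex to \<open>a\<close>, the adapted-weight
  condition bounds the mass of all new vertices on edges at \<open>a\<close> by \<open>2 \<mu>\<^sub>o(a)\<close>; together with
  \<open>\<mu>\<^sub>o(a)\<close> itself this gives the factor 3.\<close>

section \<open>Paths and path distances\<close>

lemma is_path_Nil [simp]: "\<not> is_path w []"
  by (simp add: is_path_def)

lemma is_path_single [simp]: "is_path w [a]"
  by (simp add: is_path_def)

lemma is_path_Cons_Cons [simp]: "is_path w (a # b # xs) \<longleftrightarrow> w a b > 0 \<and> is_path w (b # xs)"
  by (auto simp: is_path_def less_Suc_eq_0_disj)

lemma path_len_single [simp]: "path_len \<sigma> [a] = 0"
  by (simp add: path_len_def)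

lemma path_len_Cons_Cons [simp]: "path_len \<sigma> (a # b # xs) = \<sigma> a b + path_len \<sigma> (b # xs)"
  unfolding path_len_def by (simp add: sum.lessThan_Suc_shift del: sum.lessThan_Suc)

lemma potential_diff_le_path_len:
  assumes "\<And>u v. w u v > 0 \<Longrightarrow> f v \<le> f u + \<sigma> u v" and "is_path w xs"
  shows "f (last xs) - f (hd xs) \<le> path_len \<sigma> xs"
  using assms(2)
proof (induction xs rule: induct_list012)
  case (3 a b xs)
  then show ?case
    using assms(1)[of a b] by simp
qed simp_all

lemma path_len_nonneg:
  assumes "\<And>u v. w u v > 0 \<Longrightarrow> 0 \<le> \<sigma> u v" and "is_path w xs"
  shows "0 \<le> path_len \<sigma> xs"
  using potential_diff_le_path_len[of w "\<lambda>_. 0" \<sigma> xs] assms by simp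

lemma path_join:
  assumes "is_path w xs" "is_path w ys" "last xs = hd ys"
  shows "is_path w (butlast xs @ ys)"
    and "path_len \<sigma> (butlast xs @ ys) = path_len \<sigma> xs + path_len \<sigma> ys"
    and "hd (butlast xs @ ys) = hd xs" and "last (butlast xs @ ys) = last ys"
proof -
  have "is_path w (butlast xs @ ys) \<and> path_len \<sigma> (butlast xs @ ys) = path_len \<sigma> xs + path_len \<sigma> ys
      \<and> hd (butlast xs @ ys) = hd xs"
    using assms
  proof (induction xs rule: induct_list012)
    case (2 a)
    then show ?case by (cases ys) auto
  next
    case (3 a b xs)
    then show ?case by (cases "butlast (b # xs) @ ys") auto
  qed simp
  then show "is_path w (butlast xs @ ys)" "path_len \<sigma> (butlast xs @ ys) = path_len \<sigma> xs + path_len \<sigma> ys"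
    "hd (butlast xs @ ys) = hd xs" by auto
  show "last (butlast xs @ ys) = last ys"
    using assms(2) by (cases ys) auto
qed

lemma path_map_upt:
  assumes "\<And>k. k < K \<Longrightarrow> w (p k) (p (Suc k)) > 0 \<and> \<sigma> (p k) (p (Suc k)) = c"
  shows "is_path w (map p [0..<Suc K])" "path_len \<sigma> (map p [0..<Suc K]) = real K * c"
    "hd (map p [0..<Suc K]) = p 0" "last (map p [0..<Suc K]) = p K"
proof -
  show "is_path w (map p [0..<Suc K])"
    using assms by (simp add: is_path_def del: upt_Suc)
  have "path_len \<sigma> (map p [0..<Suc K]) = (\<Sum>k<K. \<sigma> (p k) (p (Suc k)))"
    unfolding path_len_def by (intro sum.cong) (auto simp del: upt_Suc)
  also have "\<dots> = real K * c"
    using assms by simp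
  finally show "path_len \<sigma> (map p [0..<Suc K]) = real K * c" .
  show "hd (map p [0..<Suc K]) = p 0" "last (map p [0..<Suc K]) = p K"
    by (simp_all add: hd_map last_map del: upt_Suc)
qed

lemma potential_diff_le_path_dist:
  assumes "\<And>u v. w u v > 0 \<Longrightarrow> f v \<le> f u + \<sigma> u v"
    and "is_path w xs" "hd xs = x" "last xs = y"
  shows "f y - f x \<le> path_dist w \<sigma> x y"
  unfolding path_dist_def
proof (rule cInf_greatest)
  fix l assume "l \<in> {path_len \<sigma> xs |xs. is_path w xs \<and> hd xs = x \<and> last xs = y}"
  then show "f y - f x \<le> l"
    using potential_diff_le_path_len[of w f \<sigma>, OF assms(1)] by blast
qed (use assms in blast)

lemma path_dist_le_path_len:
  assumes "\<And>u v. w u v > 0 \<Longrightarrow> 0 \<le> \<sigma> u v"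
    and "is_path w xs" "hd xs = x" "last xs = y"
  shows "path_dist w \<sigma> x y \<le> path_len \<sigma> xs"
  unfolding path_dist_def
proof (rule cInf_lower)
  show "bdd_below {path_len \<sigma> xs |xs. is_path w xs \<and> hd xs = x \<and> last xs = y}"
    using path_len_nonneg[OF assms(1)] by (intro bdd_belowI[of _ 0]) auto
qed (use assms in blast)

lemma path_dist_self:
  assumes "\<And>u v. w u v > 0 \<Longrightarrow> 0 \<le> \<sigma> u v"
  shows "path_dist w \<sigma> x x = 0"
proof (rule antisym)
  show "path_dist w \<sigma> x x \<le> 0"
    using path_dist_le_path_len[OF assms, where xs="[x]"] by simp
  show "0 \<le> path_dist w \<sigma> x x"
    using potential_diff_le_path_dist[where f="\<lambda>_. 0" and xs="[x]"] assms by simp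
qed

lemma path_dist_edge_le:
  assumes "\<And>u v. w u v > 0 \<Longrightarrow> 0 \<le> \<sigma> u v"
    and "is_path w xs" "hd xs = x" "last xs = y" and "w y z > 0"
  shows "path_dist w \<sigma> x z \<le> path_dist w \<sigma> x y + \<sigma> y z"
proof -
  have "path_dist w \<sigma> x z - \<sigma> y z \<le> path_len \<sigma> ys"
    if "is_path w ys" "hd ys = x" "last ys = y" for ys
  proof -
    have yz: "is_path w [y, z]" "last ys = hd [y, z]"
      using assms(5) that by auto
    have "path_dist w \<sigma> x z \<le> path_len \<sigma> (butlast ys @ [y, z])"
      using path_join[OF that(1) yz] that by (intro path_dist_le_path_len[OF assms(1)]) auto
    also have "\<dots> = path_len \<sigma> ys + \<sigma> y z"
      using path_join[OF that(1) yz] by simp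
    finally show ?thesis by simp
  qed
  then have "path_dist w \<sigma> x z - \<sigma> y z \<le> path_dist w \<sigma> x y"
    unfolding path_dist_def[of w \<sigma> x y] using assms(2-4) by (intro cInf_greatest) auto
  then show ?thesis by simp
qed

lemma vmeasure_le_by_finite_sums:
  assumes "\<And>F. finite F \<Longrightarrow> F \<subseteq> A \<Longrightarrow> \<exists>G. finite G \<and> G \<subseteq> B \<and> sum f F \<le> c * sum g G"
    and "\<And>x. x \<in> A \<Longrightarrow> 0 \<le> f x" "\<And>x. x \<in> B \<Longrightarrow> 0 \<le> g x" "0 \<le> c"
  shows "vmeasure f A \<le> ennreal c * vmeasure g B"
  unfolding vmeasure_def nonneg_infsum_complete[OF zero_le]
proof (rule SUP_least)
  fix F assume F: "F \<in> {F. finite F \<and> F \<subseteq> A}"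
  then obtain G where G: "finite G" "G \<subseteq> B" "sum f F \<le> c * sum g G"
    using assms(1) by blast
  have "(\<Sum>x\<in>F. ennreal (f x)) = ennreal (sum f F)"
    using F assms(2) by (intro sum_ennreal) auto
  also have "\<dots> \<le> ennreal (c * sum g G)"
    using G(3) by (rule ennreal_leI)
  also have "\<dots> = ennreal c * ennreal (sum g G)"
    using assms(4) by (rule ennreal_mult')
  also have "\<dots> = ennreal c * (\<Sum>x\<in>G. ennreal (g x))"
    using G assms(3) by (subst sum_ennreal) auto
  also have "\<dots> \<le> ennreal c * (SUP G\<in>{G. finite G \<and> G \<subseteq> B}. \<Sum>x\<in>G. ennreal (g x))"
    using G by (intro mult_left_mono SUP_upper) auto
  finally show "(\<Sum>x\<in>F. ennreal (f x)) \<le> ennreal c * (SUP G\<in>{G. finite G \<and> G \<subseteq> B}. \<Sum>x\<in>G. ennreal (g x))" .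
qed

section \<open>The metric of the modified graph\<close>

lemma some_equality_unique_pair:
  assumes "P x y i" and "\<And>x' y' i'. P x' y' i' \<Longrightarrow> x' = x \<and> y' = y"
  shows "(SOME c. \<exists>x y i. P x y i \<and> c = f x y) = f x y"
proof (rule some_equality)
  fix c assume "\<exists>x y i. P x y i \<and> c = f x y"
  then show "c = f x y"
    using assms(2) by blast
qed (use assms(1) in blast)

lemma min_affine_step_le:
  fixes a b c t N :: real
  assumes "0 \<le> c"
  shows "\<bar>min (a + (t + 1) * c) (b + (N - (t + 1)) * c) - min (a + t * c) (b + (N - t) * c)\<bar> \<le> c"
  unfolding min_def using assms by (auto simp: abs_le_iff algebra_simps)

locale modified_graph =
  fixes Vo :: "'a set" and wo :: "'a \<Rightarrow> 'a \<Rightarrow> real" and \<mu>o :: "'a \<Rightarrow> real"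
    and \<sigma>o :: "'a \<Rightarrow> 'a \<Rightarrow> real" and ori :: "'a \<Rightarrow> 'a \<Rightarrow> bool" and n :: "'a \<Rightarrow> 'a \<Rightarrow> nat"
  assumes G: "weighted_graph Vo wo \<mu>o"
    and S: "adapted_weight Vo wo \<mu>o \<sigma>o"
    and O: "orientation wo ori"
    and n_sym: "\<forall>x y. wo x y > 0 \<longrightarrow> n x y = n y x"
    and n_ge2: "\<forall>x y. wo x y > 0 \<longrightarrow> 2 \<le> n x y"
begin

abbreviation "w \<equiv> mod_w wo ori n"
abbreviation "\<sigma> \<equiv> mod_sigma \<sigma>o ori n"
abbreviation "\<mu> \<equiv> mod_mu wo \<mu>o \<sigma>o n"
abbreviation "V \<equiv> mod_V Vo ori n"
abbreviation "d \<equiv> path_dist w \<sigma>"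
abbreviation "d\<^sub>o \<equiv> path_dist wo \<sigma>o"

lemma wo_sym: "wo x y = wo y x"
  using G by (auto simp: weighted_graph_def)

lemma edge_in_Vo: "wo x y > 0 \<Longrightarrow> x \<in> Vo \<and> y \<in> Vo"
  using G by (auto simp: weighted_graph_def)

lemma \<mu>o_pos: "x \<in> Vo \<Longrightarrow> 0 < \<mu>o x"
  using G by (auto simp: weighted_graph_def)

lemma finite_neighbours: "x \<in> Vo \<Longrightarrow> finite {y. wo x y > 0}"
  using G by (auto simp: weighted_graph_def)

lemma path_o_exists: "x \<in> Vo \<Longrightarrow> y \<in> Vo \<Longrightarrow> \<exists>xs. is_path wo xs \<and> hd xs = x \<and> last xs = y"
  using G by (auto simp: weighted_graph_def)

lemma \<sigma>o_sym: "wo x y > 0 \<Longrightarrow> \<sigma>o x y = \<sigma>o y x"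
  using S by (auto simp: adapted_weight_def)

lemma adapted_sum_le: "x \<in> Vo \<Longrightarrow> (\<Sum>y\<in>{y. wo x y > 0}. wo x y * (\<sigma>o x y)\<^sup>2) \<le> \<mu>o x"
proof -
  assume x: "x \<in> Vo"
  then have "(1 / \<mu>o x) * (\<Sum>y\<in>{y. wo x y > 0}. wo x y * (\<sigma>o x y)\<^sup>2) \<le> 1"
    using S x unfolding adapted_weight_def by blast
  then show ?thesis
    using \<mu>o_pos[OF x] by (simp add: field_simps)
qed

lemma ori_edge: "ori x y \<Longrightarrow> wo x y > 0"
  using O by (auto simp: orientation_def)

lemma edge_ori_cases: "wo x y > 0 \<Longrightarrow> ori x y \<or> ori y x"
  using O by (auto simp: orientation_def)

lemma ori_asym: "ori x y \<Longrightarrow> \<not> ori y x"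
  using O by (auto simp: orientation_def)

lemma n_commute: "wo x y > 0 \<Longrightarrow> n x y = n y x"
  using n_sym by auto

lemma two_le_n: "wo x y > 0 \<Longrightarrow> 2 \<le> n x y"
  using n_ge2 by auto

lemma \<sigma>o_nonneg: "wo x y > 0 \<Longrightarrow> 0 \<le> \<sigma>o x y"
  using S unfolding adapted_weight_def by (metis less_imp_le)

lemma d\<^sub>o_self: "d\<^sub>o x x = 0"
  by (rule path_dist_self) (rule \<sigma>o_nonneg)

lemma mpt_0 [simp]: "mpt n x y 0 = Orig x"
  by (simp add: mpt_def)

lemma mpt_n: "ori x y \<Longrightarrow> mpt n x y (n x y) = Orig y"
  using two_le_n[OF ori_edge, of x y] by (simp add: mpt_def)

lemma mpt_inner: "0 < k \<Longrightarrow> k < n x y \<Longrightarrow> mpt n x y k = Sub x y k"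
  by (simp add: mpt_def)

lemma mpt_eq_Sub: "mpt n x y k = Sub a b j \<Longrightarrow> a = x \<and> b = y"
  by (auto simp: mpt_def split: if_splits)

lemma sub_edge_unique:
  assumes "sub_edge ori n u v x y i" and "sub_edge ori n u v x' y' i'"
  shows "x' = x \<and> y' = y"
proof -
  have "ori x y" and i: "i < n x y"
    using assms(1) by (auto simp: sub_edge_def)
  then have "2 \<le> n x y"
    using two_le_n ori_edge by blast
  then have "mpt n x y i = Sub x y i \<or> mpt n x y (Suc i) = Sub x y (Suc i)"
    using i by (cases i) (auto simp: mpt_inner)
  then obtain j where "u = Sub x y j \<or> v = Sub x y j"
    using assms(1) unfolding sub_edge_def by blast
  with assms(2) show ?thesis
    unfolding sub_edge_def using mpt_eq_Sub by metis
qed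

lemma sub_edge_weights:
  assumes "sub_edge ori n u v x y i"
  shows "w u v = real (n x y) * wo x y" and "\<sigma> u v = \<sigma>o x y / real (n x y)"
proof -
  have ex: "\<exists>x y i. sub_edge ori n u v x y i"
    using assms by blast
  note some_eq = some_equality_unique_pair[of "sub_edge ori n u v", OF assms sub_edge_unique[OF assms]]
  show "w u v = real (n x y) * wo x y"
    using some_eq[where f="\<lambda>x y. real (n x y) * wo x y"] by (simp only: mod_w_def if_P[OF ex])
  show "\<sigma> u v = \<sigma>o x y / real (n x y)"
    using some_eq[where f="\<lambda>x y. \<sigma>o x y / real (n x y)"] by (simp only: mod_sigma_def if_P[OF ex])
qed

lemma mod_w_pos_iff: "w u v > 0 \<longleftrightarrow> (\<exists>x y i. sub_edge ori n u v x y i)"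
proof
  assume "w u v > 0"
  then show "\<exists>x y i. sub_edge ori n u v x y i"
    by (rule contrapos_pp) (simp add: mod_w_def)
next
  assume "\<exists>x y i. sub_edge ori n u v x y i"
  then obtain x y i where e: "sub_edge ori n u v x y i"
    by blast
  then have "wo x y > 0"
    using ori_edge by (simp add: sub_edge_def)
  then show "w u v > 0"
    using sub_edge_weights(1)[OF e] two_le_n[of x y] by simp
qed

lemma sub_edge_step:
  "sub_edge ori n u v x y i \<Longrightarrow> w u v > 0 \<and> \<sigma> u v = \<sigma>o x y / real (n x y)"
  using mod_w_pos_iff sub_edge_weights(2) by blast

lemma mod_sigma_nonneg: "w u v > 0 \<Longrightarrow> 0 \<le> \<sigma> u v"
proof -
  assume "w u v > 0"
  then obtain x y i where e: "sub_edge ori n u v x y i"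
    using mod_w_pos_iff by blast
  then have "wo x y > 0"
    using ori_edge by (simp add: sub_edge_def)
  then show ?thesis
    using sub_edge_weights(2)[OF e] \<sigma>o_nonneg by simp
qed

lemma subdivision_path:
  assumes "ori x y" and "K \<le> n x y"
  shows "is_path w (map (mpt n x y) [0..<Suc K])"
    and "path_len \<sigma> (map (mpt n x y) [0..<Suc K]) = real K * (\<sigma>o x y / real (n x y))"
    and "hd (map (mpt n x y) [0..<Suc K]) = Orig x"
    and "last (map (mpt n x y) [0..<Suc K]) = mpt n x y K"
proof -
  have "w (mpt n x y k) (mpt n x y (Suc k)) > 0
      \<and> \<sigma> (mpt n x y k) (mpt n x y (Suc k)) = \<sigma>o x y / real (n x y)" if "k < K" for k
    using assms that by (intro sub_edge_step[where i=k]) (simp add: sub_edge_def)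
  from path_map_upt[of K w "mpt n x y" \<sigma>, OF this]
  show "is_path w (map (mpt n x y) [0..<Suc K])"
    and "path_len \<sigma> (map (mpt n x y) [0..<Suc K]) = real K * (\<sigma>o x y / real (n x y))"
    and "hd (map (mpt n x y) [0..<Suc K]) = Orig x"
    and "last (map (mpt n x y) [0..<Suc K]) = mpt n x y K" by simp_all
qed

lemma subdivision_path_rev:
  assumes "ori x y"
  shows "is_path w (map (\<lambda>k. mpt n x y (n x y - k)) [0..<Suc (n x y)])"
    and "path_len \<sigma> (map (\<lambda>k. mpt n x y (n x y - k)) [0..<Suc (n x y)]) = \<sigma>o x y"
    and "hd (map (\<lambda>k. mpt n x y (n x y - k)) [0..<Suc (n x y)]) = Orig y"
    and "last (map (\<lambda>k. mpt n x y (n x y - k)) [0..<Suc (n x y)]) = Orig x"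
proof -
  have N: "2 \<le> n x y"
    using two_le_n ori_edge assms by blast
  have "w (mpt n x y (n x y - k)) (mpt n x y (n x y - Suc k)) > 0
      \<and> \<sigma> (mpt n x y (n x y - k)) (mpt n x y (n x y - Suc k)) = \<sigma>o x y / real (n x y)"
    if "k < n x y" for k
    using assms that by (intro sub_edge_step[where i="n x y - Suc k"]) (simp add: sub_edge_def Suc_diff_Suc)
  from path_map_upt[of "n x y" w "\<lambda>k. mpt n x y (n x y - k)" \<sigma>, OF this]
  show "is_path w (map (\<lambda>k. mpt n x y (n x y - k)) [0..<Suc (n x y)])"
    and "path_len \<sigma> (map (\<lambda>k. mpt n x y (n x y - k)) [0..<Suc (n x y)]) = \<sigma>o x y"
    and "hd (map (\<lambda>k. mpt n x y (n x y - k)) [0..<Suc (n x y)]) = Orig y"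
    and "last (map (\<lambda>k. mpt n x y (n x y - k)) [0..<Suc (n x y)]) = Orig x"
    using N mpt_n[OF assms] by simp_all
qed

lemma edge_lifts:
  assumes "wo x y > 0"
  shows "\<exists>q. is_path w q \<and> hd q = Orig x \<and> last q = Orig y \<and> path_len \<sigma> q = \<sigma>o x y"
proof (cases "ori x y")
  case True
  have "n x y \<noteq> 0"
    using two_le_n[OF assms] by simp
  then show ?thesis
    using subdivision_path[OF True order.refl] mpt_n[OF True] by auto
next
  case False
  then have "ori y x"
    using edge_ori_cases[OF assms] by blast
  then show ?thesis
    using subdivision_path_rev[OF \<open>ori y x\<close>] \<sigma>o_sym[OF assms] by metis
qed

lemma path_lifts:
  assumes "is_path wo p"
  shows "\<exists>q. is_path w q \<and> hd q = Orig (hd p) \<and> last q = Orig (last p) \<and> path_len \<sigma> q = path_len \<sigma>o p"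
  using assms
proof (induction p rule: induct_list012)
  case (2 x)
  show ?case
    by (rule exI[of _ "[Orig x]"]) simp
next
  case (3 x y p)
  then obtain q where q: "is_path w q" "hd q = Orig y" "last q = Orig (last (y # p))"
    "path_len \<sigma> q = path_len \<sigma>o (y # p)"
    by (metis is_path_Cons_Cons list.sel(1))
  obtain e where e: "is_path w e" "hd e = Orig x" "last e = Orig y" "path_len \<sigma> e = \<sigma>o x y"
    using edge_lifts "3.prems" by (metis is_path_Cons_Cons)
  have "last e = hd q"
    using e q by simp
  from path_join[OF e(1) q(1) this] show ?case
    using e q by (intro exI[of _ "butlast e @ q"]) simp
qed simp

lemma mod_path_exists:
  assumes "x0 \<in> Vo" and "v \<in> V"
  shows "\<exists>q. is_path w q \<and> hd q = Orig x0 \<and> last q = v"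
proof -
  obtain z s where z: "z \<in> Vo" and s: "is_path w s" "hd s = Orig z" "last s = v"
  proof (cases v)
    case (Orig z)
    then show ?thesis
      using assms(2) that[of z "[v]"] by (auto simp: mod_V_def)
  next
    case (Sub x y i)
    then have xy: "ori x y" and i: "1 \<le> i" "i \<le> n x y - 1"
      using assms(2) by (auto simp: mod_V_def)
    have "i < n x y"
      using i two_le_n[OF ori_edge[OF xy]] by linarith
    then have "mpt n x y i = v"
      using Sub i by (simp add: mpt_inner)
    then show ?thesis
      using subdivision_path[OF xy \<open>i < n x y\<close>[THEN less_imp_le]]
        edge_in_Vo[OF ori_edge[OF xy]] that by metis
  qed
  obtain p where "is_path wo p" "hd p = x0" "last p = z"
    using path_o_exists[OF assms(1) z] by blast
  then obtain q where q: "is_path w q" "hd q = Orig x0" "last q = Orig z"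
    using path_lifts by blast
  have "last q = hd s"
    using q s by simp
  from path_join[OF q(1) s(1) this] show ?thesis
    using q s by metis
qed

definition edge_potential :: "'a \<Rightarrow> 'a \<Rightarrow> 'a \<Rightarrow> real \<Rightarrow> real" where
  "edge_potential x0 x y t = min (d\<^sub>o x0 x + t * (\<sigma>o x y / real (n x y)))
                                  (d\<^sub>o x0 y + (real (n x y) - t) * (\<sigma>o x y / real (n x y)))"

definition potential :: "'a \<Rightarrow> 'a mvert \<Rightarrow> real" where
  "potential x0 v = (case v of Orig z \<Rightarrow> d\<^sub>o x0 z | Sub x y i \<Rightarrow> edge_potential x0 x y (real i))"

lemma potential_mpt:
  assumes "x0 \<in> Vo" and "ori x y" and "k \<le> n x y"
  shows "potential x0 (mpt n x y k) = edge_potential x0 x y (real k)"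
proof -
  have xy: "wo x y > 0" and yx: "wo y x > 0"
    using ori_edge[OF assms(2)] wo_sym by auto
  have N: "real (n x y) > 0"
    using two_le_n[OF xy] by simp
  obtain p q where "is_path wo p" "hd p = x0" "last p = x" "is_path wo q" "hd q = x0" "last q = y"
    using path_o_exists[OF assms(1)] edge_in_Vo[OF xy] by metis
  then have "d\<^sub>o x0 y \<le> d\<^sub>o x0 x + \<sigma>o x y" "d\<^sub>o x0 x \<le> d\<^sub>o x0 y + \<sigma>o y x"
    using path_dist_edge_le[of wo \<sigma>o, OF \<sigma>o_nonneg] xy yx by blast+
  then have tri: "d\<^sub>o x0 y \<le> d\<^sub>o x0 x + \<sigma>o x y" "d\<^sub>o x0 x \<le> d\<^sub>o x0 y + \<sigma>o x y"
    using \<sigma>o_sym[OF xy] by simp_all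
  consider "k = 0" | "k = n x y" | "0 < k \<and> k < n x y"
    using assms(3) by linarith
  then show ?thesis
  proof cases
    case 1
    then show ?thesis
      using tri(2) N by (simp add: potential_def edge_potential_def min_def)
  next
    case 2
    then show ?thesis
      using tri(1) N mpt_n[OF assms(2)] by (simp add: potential_def edge_potential_def min_def)
  qed (simp add: potential_def mpt_inner)
qed

lemma potential_lipschitz:
  assumes "x0 \<in> Vo" and "w u v > 0"
  shows "potential x0 v \<le> potential x0 u + \<sigma> u v"
proof -
  obtain x y i where e: "sub_edge ori n u v x y i"
    using assms(2) mod_w_pos_iff by blast
  then have xy: "ori x y" and i: "i < n x y"
    by (auto simp: sub_edge_def)
  have "\<bar>edge_potential x0 x y (real i + 1) - edge_potential x0 x y (real i)\<bar> \<le> \<sigma>o x y / real (n x y)"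
    unfolding edge_potential_def
    using \<sigma>o_nonneg[OF ori_edge[OF xy]] by (intro min_affine_step_le) simp
  moreover have "potential x0 (mpt n x y i) = edge_potential x0 x y (real i)"
    "potential x0 (mpt n x y (Suc i)) = edge_potential x0 x y (real i + 1)"
    using potential_mpt[OF assms(1) xy, of i] potential_mpt[OF assms(1) xy, of "Suc i"] i by (simp_all add: add.commute)
  ultimately show ?thesis
    using e sub_edge_weights(2)[OF e] unfolding sub_edge_def by auto
qed

lemma potential_le_mod_dist:
  assumes "x0 \<in> Vo" and "v \<in> V"
  shows "potential x0 v \<le> d (Orig x0) v"
proof -
  obtain q where "is_path w q" "hd q = Orig x0" "last q = v"
    using mod_path_exists[OF assms] by blast
  then have "potential x0 v - potential x0 (Orig x0) \<le> d (Orig x0) v"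
    using potential_lipschitz[OF assms(1)] by (intro potential_diff_le_path_dist)
  then show ?thesis
    by (simp add: potential_def d\<^sub>o_self)
qed

lemma mod_dist_Orig:
  assumes "x \<in> Vo" and "y \<in> Vo"
  shows "d (Orig x) (Orig y) = d\<^sub>o x y"
proof (rule antisym)
  show "d\<^sub>o x y \<le> d (Orig x) (Orig y)"
    using potential_le_mod_dist[OF assms(1), of "Orig y"] assms(2)
    by (simp add: potential_def mod_V_def)
  show "d (Orig x) (Orig y) \<le> d\<^sub>o x y"
    unfolding path_dist_def[of wo \<sigma>o x y]
  proof (rule cInf_greatest)
    fix l assume "l \<in> {path_len \<sigma>o p |p. is_path wo p \<and> hd p = x \<and> last p = y}"
    then obtain p where "is_path wo p" "hd p = x" "last p = y" "l = path_len \<sigma>o p"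
      by blast
    then obtain q where "is_path w q" "hd q = Orig x" "last q = Orig y" "path_len \<sigma> q = l"
      using path_lifts by metis
    then show "d (Orig x) (Orig y) \<le> l"
      using path_dist_le_path_len[of w \<sigma>, OF mod_sigma_nonneg] by metis
  qed (use path_o_exists[OF assms] in blast)
qed

lemma Sub_near_endpoint:
  assumes "x0 \<in> Vo" and "Sub x y i \<in> V" and "d (Orig x0) (Sub x y i) \<le> r"
  shows "d\<^sub>o x0 x \<le> r \<or> d\<^sub>o x0 y \<le> r"
proof -
  have xy: "wo x y > 0" and "i \<le> n x y - 1"
    using assms(2) ori_edge by (auto simp: mod_V_def)
  then have "0 \<le> real i * (\<sigma>o x y / real (n x y))"
    "0 \<le> (real (n x y) - real i) * (\<sigma>o x y / real (n x y))"
    using \<sigma>o_nonneg[OF xy] by auto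
  moreover have "edge_potential x0 x y (real i) \<le> r"
    using potential_le_mod_dist[OF assms(1,2)] assms(3) by (simp add: potential_def)
  ultimately show ?thesis
    unfolding edge_potential_def by linarith
qed

section \<open>Measures of balls\<close>

lemma mod_mu_nonneg: "v \<in> V \<Longrightarrow> 0 \<le> \<mu> v"
  using \<mu>o_pos ori_edge \<sigma>o_nonneg by (fastforce simp: mod_V_def less_imp_le)

definition star :: "'a \<Rightarrow> 'a mvert set" where
  "star a = (\<lambda>(b, i). if ori a b then Sub a b i else Sub b a i) ` Sigma {b. wo a b > 0} (\<lambda>b. {1..n a b - 1})"

lemma star_subset_V: "star a \<subseteq> V"
  using edge_ori_cases by (fastforce simp: star_def mod_V_def n_commute)

lemma finite_star: "a \<in> Vo \<Longrightarrow> finite (star a)"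
  unfolding star_def using finite_neighbours by blast

lemma star_mass_le:
  assumes "a \<in> Vo"
  shows "sum \<mu> (star a) \<le> 2 * \<mu>o a"
proof -
  let ?E = "{b. wo a b > 0}"
  have "inj_on (\<lambda>(b, i). if ori a b then Sub a b i else Sub b a i) (Sigma ?E (\<lambda>b. {1..n a b - 1}))"
    using ori_asym by (auto simp: inj_on_def split: if_splits)
  then have "sum \<mu> (star a) = (\<Sum>(b, i)\<in>Sigma ?E (\<lambda>b. {1..n a b - 1}). 2 * wo a b * (\<sigma>o a b)\<^sup>2 / real (n a b))"
    unfolding star_def using wo_sym \<sigma>o_sym n_commute by (subst sum.reindex) (auto intro: sum.cong)
  also have "\<dots> = (\<Sum>b\<in>?E. real (n a b - 1) * (2 * wo a b * (\<sigma>o a b)\<^sup>2 / real (n a b)))"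
    using finite_neighbours[OF assms] by (subst sum.Sigma[symmetric]) auto
  also have "\<dots> \<le> (\<Sum>b\<in>?E. 2 * (wo a b * (\<sigma>o a b)\<^sup>2))"
  proof (rule sum_mono)
    fix b assume "b \<in> ?E"
    then have "wo a b > 0" "2 \<le> n a b"
      using two_le_n by auto
    then show "real (n a b - 1) * (2 * wo a b * (\<sigma>o a b)\<^sup>2 / real (n a b)) \<le> 2 * (wo a b * (\<sigma>o a b)\<^sup>2)"
      by (simp add: of_nat_diff field_simps)
  qed
  also have "\<dots> \<le> 2 * \<mu>o a"
    using adapted_sum_le[OF assms] by (simp add: sum_distrib_left[symmetric])
  finally show ?thesis .
qed

definition anchor :: "'a \<Rightarrow> real \<Rightarrow> 'a mvert \<Rightarrow> 'a" where
  "anchor x0 r v = (case v of Orig z \<Rightarrow> z | Sub x y i \<Rightarrow> if d\<^sub>o x0 x \<le> r then x else y)"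

lemma anchor_in_ball:
  assumes "x0 \<in> Vo" and "v \<in> cball_in V d (Orig x0) r"
  shows "anchor x0 r v \<in> cball_in Vo d\<^sub>o x0 r"
proof (cases v)
  case (Orig z)
  then show ?thesis
    using assms mod_dist_Orig by (auto simp: cball_in_def mod_V_def anchor_def)
next
  case (Sub x y i)
  then have "ori x y"
    using assms(2) by (auto simp: cball_in_def mod_V_def)
  then show ?thesis
    using Sub assms Sub_near_endpoint[OF assms(1)] edge_in_Vo[OF ori_edge]
    by (auto simp: cball_in_def anchor_def)
qed

lemma anchor_fiber:
  assumes "v \<in> V"
  shows "v \<in> insert (Orig (anchor x0 r v)) (star (anchor x0 r v))"
proof (cases v)
  case (Sub x y i)
  then have xy: "ori x y" "1 \<le> i" "i \<le> n x y - 1"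
    using assms by (auto simp: mod_V_def)
  have "wo x y > 0" "wo y x > 0"
    using ori_edge[OF xy(1)] wo_sym by auto
  then show ?thesis
    using Sub xy ori_asym[OF xy(1)] n_commute
    by (auto simp: anchor_def star_def image_iff intro!: bexI[of _ "(y, i)"] bexI[of _ "(x, i)"])
qed (simp add: anchor_def)

lemma ball_mass_le:
  assumes "x0 \<in> Vo" and "finite F" and F: "F \<subseteq> cball_in V d (Orig x0) r"
  shows "sum \<mu> F \<le> 3 * sum \<mu>o (anchor x0 r ` F)"
proof -
  have FV: "F \<subseteq> V"
    using F by (auto simp: cball_in_def)
  have "sum \<mu> F = (\<Sum>a\<in>anchor x0 r ` F. sum \<mu> {v \<in> F. anchor x0 r v = a})"
    using assms(2) by (rule sum.image_gen)
  also have "\<dots> \<le> (\<Sum>a\<in>anchor x0 r ` F. 3 * \<mu>o a)"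
  proof (rule sum_mono)
    fix a assume a: "a \<in> anchor x0 r ` F"
    then have aVo: "a \<in> Vo"
      using anchor_in_ball[OF assms(1)] F by (auto simp: cball_in_def)
    have "{v \<in> F. anchor x0 r v = a} \<subseteq> insert (Orig a) (star a)"
      using anchor_fiber FV by blast
    moreover have "insert (Orig a) (star a) \<subseteq> V"
      using aVo star_subset_V by (auto simp: mod_V_def)
    ultimately have "sum \<mu> {v \<in> F. anchor x0 r v = a} \<le> sum \<mu> (insert (Orig a) (star a))"
      using finite_star[OF aVo] mod_mu_nonneg by (intro sum_mono2) auto
    also have "\<dots> \<le> \<mu>o a + sum \<mu> (star a)"
      using \<mu>o_pos[OF aVo] by (simp add: sum.insert_if finite_star[OF aVo])
    also have "\<dots> \<le> 3 * \<mu>o a"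
      using star_mass_le[OF aVo] by simp
    finally show "sum \<mu> {v \<in> F. anchor x0 r v = a} \<le> 3 * \<mu>o a" .
  qed
  finally show ?thesis
    by (simp add: sum_distrib_left)
qed

lemma vmeasure_ball_ge:
  assumes "x0 \<in> Vo"
  shows "vmeasure \<mu>o (cball_in Vo d\<^sub>o x0 r) \<le> vmeasure \<mu> (cball_in V d (Orig x0) r)"
proof -
  have "vmeasure \<mu>o (cball_in Vo d\<^sub>o x0 r) \<le> ennreal 1 * vmeasure \<mu> (cball_in V d (Orig x0) r)"
  proof (rule vmeasure_le_by_finite_sums)
    fix F assume F: "finite F" "F \<subseteq> cball_in Vo d\<^sub>o x0 r"
    then have "Orig ` F \<subseteq> cball_in V d (Orig x0) r"
      using assms mod_dist_Orig by (auto simp: cball_in_def mod_V_def)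
    moreover have "sum \<mu>o F = sum \<mu> (Orig ` F)"
      by (simp add: sum.reindex inj_on_def)
    ultimately show "\<exists>G. finite G \<and> G \<subseteq> cball_in V d (Orig x0) r \<and> sum \<mu>o F \<le> 1 * sum \<mu> G"
      using F(1) by (intro exI[of _ "Orig ` F"]) simp
  qed (simp_all add: cball_in_def less_imp_le[OF \<mu>o_pos] mod_mu_nonneg)
  then show ?thesis
    by simp
qed

lemma vmeasure_ball_le:
  assumes "x0 \<in> Vo"
  shows "vmeasure \<mu> (cball_in V d (Orig x0) r) \<le> 3 * vmeasure \<mu>o (cball_in Vo d\<^sub>o x0 r)"
proof -
  have "vmeasure \<mu> (cball_in V d (Orig x0) r) \<le> ennreal 3 * vmeasure \<mu>o (cball_in Vo d\<^sub>o x0 r)"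
  proof (rule vmeasure_le_by_finite_sums)
    fix F assume "finite F" "F \<subseteq> cball_in V d (Orig x0) r"
    then show "\<exists>G. finite G \<and> G \<subseteq> cball_in Vo d\<^sub>o x0 r \<and> sum \<mu> F \<le> 3 * sum \<mu>o G"
      using anchor_in_ball[OF assms] ball_mass_le[OF assms] by (intro exI[of _ "anchor x0 r ` F"]) auto
  qed (simp_all add: cball_in_def less_imp_le[OF \<mu>o_pos] mod_mu_nonneg)
  then show ?thesis
    by simp
qed

end

theorem lemma3p1:
  fixes Vo :: "'a set" and wo :: "'a \<Rightarrow> 'a \<Rightarrow> real" and \<mu>o :: "'a \<Rightarrow> real"
    and \<sigma>o :: "'a \<Rightarrow> 'a \<Rightarrow> real" and ori :: "'a \<Rightarrow> 'a \<Rightarrow> bool" and n :: "'a \<Rightarrow> 'a \<Rightarrow> nat"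
  assumes G: "weighted_graph Vo wo \<mu>o"
    and S: "adapted_weight Vo wo \<mu>o \<sigma>o"
    and O: "orientation wo ori"
    and n_sym: "\<forall>x y. wo x y > 0 \<longrightarrow> n x y = n y x"
    and n_ge2: "\<forall>x y. wo x y > 0 \<longrightarrow> 2 \<le> n x y"
  shows "(\<forall>x\<in>Vo. \<forall>y\<in>Vo.
            path_dist (mod_w wo ori n) (mod_sigma \<sigma>o ori n) (Orig x) (Orig y) = path_dist wo \<sigma>o x y)
       \<and> (\<forall>x0\<in>Vo. \<forall>r>0.
            vmeasure \<mu>o (cball_in Vo (path_dist wo \<sigma>o) x0 r)
              \<le> vmeasure (mod_mu wo \<mu>o \<sigma>o n)
                   (cball_in (mod_V Vo ori n) (path_dist (mod_w wo ori n) (mod_sigma \<sigma>o ori n)) (Orig x0) r)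
          \<and> vmeasure (mod_mu wo \<mu>o \<sigma>o n)
                   (cball_in (mod_V Vo ori n) (path_dist (mod_w wo ori n) (mod_sigma \<sigma>o ori n)) (Orig x0) r)
              \<le> 3 * vmeasure \<mu>o (cball_in Vo (path_dist wo \<sigma>o) x0 r))"
proof -
  interpret modified_graph Vo wo \<mu>o \<sigma>o ori n
    by (rule modified_graph.intro) (fact assms)+
  show ?thesis
    by (simp add: mod_dist_Orig vmeasure_ball_ge vmeasure_ball_le)
qed

end
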